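(* Let $p$ and $p'$ be consecutive patterns of the same length $r$ that are non-overlapping, mutually non-overlapping, and interchangeable. Then for all $n$ and all $S,T\subseteq[n]$, $$|\{e\in\mathbf{I}_n:\mathrm{Em}(p,e)=S,\ \mathrm{Em}(p',e)=T\}|=|\{e\in\mathbf{I}_n:\mathrm{Em}(p,e)=T,\ \mathrm{Em}(p',e)=S\}|.$$ In particular, $p$ and $p'$ are super-strongly Wilf equivalent.
   Context: An inversion sequence of length $n$ is an integer sequence $e=e_1e_2\dots e_n$ with $0\le e_i<i$ for all $i$; $\mathbf{I}_n$ denotes the set of these. A pattern of length $r$ is a sequence $p=p_1\dots p_r$ with $p_i\in\{0,\dots,r-1\}$ such that whenever a value $j>0$ appears in $p$, the value $j-1$ also appears. The reduction of an integer word $w$ is obtained by replacing every occurrence of the $i$-th smallest distinct value of $w$ by $i-1$. An inversion sequence $e$ has an occurrence of the consecutive pattern $p$ in position $i$ if the reduction of $e_i\dots e_{i+r-1}$ equals $p$; $\mathrm{Em}(p,e)$ is the set of such positions. $p=p_1\dots p_r$ is non-overlapping if for every $1<i<r$ the reductions of $p_1\dots p_i$ and $p_{r-i+1}\dots p_r$ differ. $p,p'$ (both of length $r$) are mutually non-overlapping if for every $1<i<r$ the reductions of $p_1\dots p_i$ and $p'_{r-i+1}\dots p'_r$ differ, and the reductions of $p'_1\dots p'_i$ and $p_{r-i+1}\dots p_r$ differ. Given patterns $p,p'$ of length $r$ with $p_1=p'_1$, $p_r=p'_r$ and $\max_i p_i=\max_i p'_i$, $p$ is changeable for $p'$ if for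 all $1\le i\le r$, $p'_i\le\max(\{p_j:1\le j\le i\}\cup\{p_j-j+i: i<j\le r\})$; $p$ and $p'$ are interchangeable if each is changeable for the other. Two patterns are super-strongly Wilf equivalent if $|\{e\in\mathbf{I}_n:\mathrm{Em}(p,e)=T\}|=|\{e\in\mathbf{I}_n:\mathrm{Em}(p',e)=T\}|$ for all $n$ and all $T\subseteq[n]$. *)

theory Defs
  imports Main
begin

text \<open>Words and sequences are lists of naturals; list index k (0-based) corresponds to
  the paper's index k+1. Positions of occurrences are reported 1-based, as subsets of [n].\<close>

definition inv_seqs :: "nat \<Rightarrow> nat list set" where
  "inv_seqs n = {e. length e = n \<and> (\<forall>i<n. e ! i < i + 1)}"

definition is_pattern :: "nat list \<Rightarrow> nat \<Rightarrow> bool" where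
  "is_pattern p r \<longleftrightarrow> length p = r \<and> (\<forall>x\<in>set p. x < r)
     \<and> (\<forall>j\<in>set p. j > 0 \<longrightarrow> j - 1 \<in> set p)"

definition red :: "nat list \<Rightarrow> nat list" where
  "red w = map (\<lambda>x. card {y \<in> set w. y < x}) w"

definition Em :: "nat list \<Rightarrow> nat list \<Rightarrow> nat set" where
  "Em p e = {i. 1 \<le> i \<and> i + length p \<le> length e + 1
                \<and> red (take (length p) (drop (i - 1) e)) = p}"

definition non_overlapping :: "nat list \<Rightarrow> bool" where
  "non_overlapping p \<longleftrightarrow>
     (\<forall>i. 1 < i \<and> i < length p \<longrightarrow> red (take i p) \<noteq> red (drop (length p - i) p))"

definition mutually_non_overlapping :: "nat list \<Rightarrow> nat list \<Rightarrow> bool" where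
  "mutually_non_overlapping p q \<longleftrightarrow> length p = length q \<and>
     (\<forall>i. 1 < i \<and> i < length p \<longrightarrow>
        red (take i p) \<noteq> red (drop (length q - i) q) \<and>
        red (take i q) \<noteq> red (drop (length p - i) p))"

text \<open>Changeability, including the standing requirements p_1 = p'_1, p_r = p'_r and equal
  maxima; the bound uses integers since p_j - j + i may be negative.\<close>
definition changeable :: "nat list \<Rightarrow> nat list \<Rightarrow> bool" where
  "changeable p q \<longleftrightarrow> length p = length q \<and> p \<noteq> [] \<and>
     hd p = hd q \<and> last p = last q \<and> Max (set p) = Max (set q) \<and>
     (\<forall>i < length p. int (q ! i) \<le>
        Max ({int (p ! j) | j. j \<le> i} \<union>
             {int (p ! j) - int j + int i | j. i < j \<and> j < length p}))"

definition interchangeable :: "nat list \<Rightarrow> nat list \<Rightarrow> bool" where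
  "interchangeable p q \<longleftrightarrow> changeable p q \<and> changeable q p"

definition super_strongly_wilf_equiv :: "nat list \<Rightarrow> nat list \<Rightarrow> bool" where
  "super_strongly_wilf_equiv p q \<longleftrightarrow>
     (\<forall>n T. T \<subseteq> {1..n} \<longrightarrow>
        card {e \<in> inv_seqs n. Em p e = T} = card {e \<in> inv_seqs n. Em q e = T})"

end

theory Submission
  imports Defs
begin

text \<open>Two occurrences of p or q in a word overlap in at most one entry, because of the
  (mutual) non-overlapping hypotheses, and p and q agree in their first and last entries. So
  rewriting every occurrence of p as the word with the same values in the order of q, and vice
  versa, only touches interior entries and is a well-defined involution; it exchanges the
  occurrence sets of p and q. Changeability of p for q and of q for p is exactly what keeps the
  rewritten entries below their positions, so the involution preserves inversion sequences.\<close>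

lemma red_map_strict_mono:
  assumes "strict_mono_on (set w) (f :: nat \<Rightarrow> nat)"
  shows "red (map f w) = red w"
proof -
  have "{y \<in> f ` set w. y < f x} = f ` {y \<in> set w. y < x}" if "x \<in> set w" for x
    using strict_mono_on_less[OF assms _ that] by auto
  moreover have "inj_on f {y \<in> set w. y < x}" for x
    using strict_mono_on_imp_inj_on[OF assms] by (rule inj_on_subset) auto
  ultimately show ?thesis by (simp add: red_def card_image)
qed

lemma length_red [simp]: "length (red w) = length w"
  by (simp add: red_def)

lemma red_map_rank:
  assumes "set u \<subseteq> set w"
  shows "red (map (\<lambda>x. card {y \<in> set w. y < x}) u) = red u"
  by (rule red_map_strict_mono, rule strict_mono_onI, rule psubset_card_mono) (use assms in auto)

lemma red_take_red: "red (take i (red w)) = red (take i w)"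
  by (simp only: red_def[of w] take_map) (rule red_map_rank[OF set_take_subset])

lemma red_drop_red: "red (drop i (red w)) = red (drop i w)"
  by (simp only: red_def[of w] drop_map) (rule red_map_rank[OF set_drop_subset])

lemma set_red: "set (red w) = {0..<card (set w)}"
proof -
  let ?rk = "\<lambda>x. card {y \<in> set w. y < x}"
  have "strict_mono_on (set w) ?rk"
    by (rule strict_mono_onI, rule psubset_card_mono) auto
  then have "card (?rk ` set w) = card {0..<card (set w)}"
    by (simp add: card_image strict_mono_on_imp_inj_on)
  moreover have "?rk ` set w \<subseteq> {0..<card (set w)}"
    by (auto intro!: psubset_card_mono)
  ultimately show ?thesis
    by (simp add: red_def card_subset_eq)
qed

lemma red_ident:
  assumes "set P = {0..<m}"
  shows "red P = P"
proof -
  have "{y \<in> set P. y < x} = {..<x}" if "x \<in> set P" for x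
    using assms that by auto
  then show ?thesis by (simp add: red_def map_idI)
qed

lemma red_map_nth_sorted:
  assumes "sorted_wrt (<) xs" and "set P \<subseteq> {0..<length xs}"
  shows "red (map ((!) xs) P) = red P"
proof (intro red_map_strict_mono strict_mono_onI)
  fix i j assume "i \<in> set P" "j \<in> set P" "i < j"
  then show "xs ! i < xs ! j"
    using assms by (auto intro!: sorted_wrt_nth_less)
qed

lemma card_less_nth_sorted:
  fixes xs :: "nat list"
  assumes "sorted_wrt (<) xs" and "i < length xs"
  shows "card {y \<in> set xs. y < xs ! i} = i"
proof -
  have mono: "strict_mono_on {..<length xs} ((!) xs)"
    using assms(1) by (intro strict_mono_onI) (auto intro: sorted_wrt_nth_less)
  have "{y \<in> set xs. y < xs ! i} = (!) xs ` {..<i}"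
    using assms(2) strict_mono_on_less[OF mono] by (auto simp: in_set_conv_nth intro: less_trans)
  moreover have "inj_on ((!) xs) {..<i}"
    using strict_mono_on_imp_inj_on[OF mono] by (rule inj_on_subset) (use assms(2) in auto)
  ultimately show ?thesis by (simp add: card_image)
qed

definition values_of :: "nat list \<Rightarrow> nat list" where
  "values_of w = sorted_list_of_set (set w)"

lemma sorted_values_of: "sorted_wrt (<) (values_of w)"
  by (simp add: values_of_def strict_sorted_list_of_set)

lemma set_values_of: "set (values_of w) = set w"
  by (simp add: values_of_def)

lemma length_values_of: "length (values_of w) = card (set w)"
  by (simp add: values_of_def length_sorted_list_of_set)

lemma values_of_nth_red:
  assumes "k < length w"
  shows "values_of w ! (red w ! k) = w ! k"
proof -
  obtain i where i: "i < length (values_of w)" "values_of w ! i = w ! k"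
    using assms set_values_of by (metis in_set_conv_nth nth_mem)
  have "red w ! k = card {y \<in> set (values_of w). y < values_of w ! i}"
    using assms i by (simp add: red_def set_values_of)
  also have "\<dots> = i"
    using card_less_nth_sorted[OF sorted_values_of i(1)] .
  finally show ?thesis using i by simp
qed

lemma strict_sorted_nth_gap:
  fixes xs :: "nat list"
  assumes "sorted_wrt (<) xs" and "i \<le> j" and "j < length xs"
  shows "xs ! i + (j - i) \<le> xs ! j"
  using assms(2,3)
proof (induction j)
  case (Suc j)
  show ?case
  proof (cases "i = Suc j")
    case False
    then have "xs ! i + (j - i) \<le> xs ! j" and "xs ! j < xs ! Suc j"
      using Suc assms(1) by (auto intro: sorted_wrt_nth_less)
    then show ?thesis using False Suc.prems by simp
  qed simp
qed simp

lemma set_pattern: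
  assumes "is_pattern p r" and "p \<noteq> []"
  shows "set p = {0..Max (set p)}"
proof -
  have down: "y \<in> set p" if "x \<in> set p" "y \<le> x" for x y
    using that
  proof (induction x)
    case (Suc x)
    then show ?case
      using assms(1) by (cases "y = Suc x") (fastforce simp: is_pattern_def)+
  qed simp
  show ?thesis
    using down[OF Max_in] Max_ge assms(2) by fastforce
qed

text \<open>Here v lists the values of a window of an inversion sequence starting at a, with
  reduction P, in increasing order; rewriting the window to have reduction Q respects the
  inversion-sequence bound.\<close>

lemma changeable_entry_bound:
  fixes v :: "nat list"
  assumes ch: "changeable P Q" and sorted: "sorted_wrt (<) v"
    and "set P \<subseteq> {0..<length v}"
    and bound: "\<And>j. j < length P \<Longrightarrow> v ! (P ! j) \<le> a + j"
    and c: "c < length P"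
  shows "v ! (Q ! c) \<le> a + c"
proof -
  have P_less: "P ! j < length v" if "j < length P" for j
    using assms(3) nth_mem[OF that] by auto
  define A where "A = {int (P ! j) | j. j \<le> c}"
  define B where "B = {int (P ! j) - int j + int c | j. c < j \<and> j < length P}"
  have "A = (\<lambda>j. int (P ! j)) ` {..c}"
    and "B = (\<lambda>j. int (P ! j) - int j + int c) ` {c<..<length P}"
    unfolding A_def B_def by auto
  then have "Max (A \<union> B) \<in> A \<union> B"
    by (intro Max_in) auto
  moreover have "int (Q ! c) \<le> Max (A \<union> B)"
    using ch c unfolding changeable_def A_def B_def by blast
  ultimately consider j where "j \<le> c" "Q ! c \<le> P ! j"
    | j where "c < j" "j < length P" "Q ! c + j \<le> P ! j + c"
    unfolding A_def B_def by fastforce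
  then show ?thesis
  proof cases
    case (1 j)
    then have "v ! (Q ! c) \<le> v ! (P ! j)"
      using strict_sorted_nth_gap[OF sorted, of "Q ! c" "P ! j"] P_less c by simp
    then show ?thesis using bound[of j] 1 c by simp
  next
    case (2 j)
    then have "v ! (Q ! c) + (P ! j - Q ! c) \<le> v ! (P ! j)"
      using strict_sorted_nth_gap[OF sorted, of "Q ! c" "P ! j"] P_less by simp
    then show ?thesis using bound[of j] 2 by linarith
  qed
qed

definition window :: "nat \<Rightarrow> nat list \<Rightarrow> nat \<Rightarrow> nat list" where
  "window r e a = take r (drop a e)"

lemma length_window: "a + r \<le> length e \<Longrightarrow> length (window r e a) = r"
  by (simp add: window_def)

lemma nth_window: "a + r \<le> length e \<Longrightarrow> c < r \<Longrightarrow> window r e a ! c = e ! (a + c)"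
  by (simp add: window_def)

lemma Em_conv_window:
  assumes "length P = r"
  shows "Em P e = Suc ` {a. a + r \<le> length e \<and> red (window r e a) = P}"
proof -
  have "i \<in> Em P e \<longleftrightarrow> i \<in> Suc ` {a. a + r \<le> length e \<and> red (window r e a) = P}" for i
    using assms by (cases i) (auto simp: Em_def window_def)
  then show ?thesis by blast
qed

locale interchangeable_patterns =
  fixes p q :: "nat list" and r :: nat
  assumes pattern_p: "is_pattern p r" and pattern_q: "is_pattern q r"
    and non_overlapping_p: "non_overlapping p" and non_overlapping_q: "non_overlapping q"
    and mutually_non_overlapping: "mutually_non_overlapping p q"
    and interchangeable: "interchangeable p q"
begin

lemma length_p: "length p = r" and length_q: "length q = r"
  using pattern_p pattern_q by (auto simp: is_pattern_def)

lemma changeable_p_q: "changeable p q" and changeable_q_p: "changeable q p"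
  using interchangeable by (auto simp: interchangeable_def)

lemma p_q_nonempty: "p \<noteq> []" "q \<noteq> []"
  using changeable_p_q length_p length_q by (auto simp: changeable_def)

lemma set_q: "set q = set p"
  using set_pattern[OF pattern_p p_q_nonempty(1)] set_pattern[OF pattern_q p_q_nonempty(2)]
    changeable_p_q by (simp add: changeable_def)

lemma q_endpoints: "q ! 0 = p ! 0" "q ! (r - 1) = p ! (r - 1)"
  using changeable_p_q p_q_nonempty length_p length_q
  by (auto simp: changeable_def hd_conv_nth last_conv_nth)

definition other :: "nat list \<Rightarrow> nat list" where
  "other P = (if P = p then q else p)"

lemma other_cases: "other P = p \<or> other P = q"
  by (simp add: other_def)

lemma other_eq_iff: "P = p \<or> P = q \<Longrightarrow> P' = p \<or> P' = q \<Longrightarrow> other P = P' \<longleftrightarrow> P = other P'"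
  by (auto simp: other_def)

lemma other_other: "P = p \<or> P = q \<Longrightarrow> other (other P) = P"
  by (auto simp: other_def)

lemma changeable_other: "P = p \<or> P = q \<Longrightarrow> changeable P (other P)"
  using changeable_p_q changeable_q_p by (auto simp: other_def)

lemma set_other: "set (other P) = set p"
  by (simp add: other_def set_q)

lemma other_endpoints: "P = p \<or> P = q \<Longrightarrow> c = 0 \<or> c = r - 1 \<Longrightarrow> other P ! c = P ! c"
  using q_endpoints by (auto simp: other_def)

definition occurs_at :: "nat list \<Rightarrow> nat \<Rightarrow> bool" where
  "occurs_at e a \<longleftrightarrow> a + r \<le> length e \<and> (red (window r e a) = p \<or> red (window r e a) = q)"

lemma occurrences_apart:
  assumes "occurs_at e a" and "occurs_at e b" and "a < b"
  shows "a + r \<le> b + 1"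
proof (rule ccontr)
  assume overlap: "\<not> a + r \<le> b + 1"
  define ov where "ov = a + r - b"
  have ov: "1 < ov" "ov < r" "b - a = r - ov" "a + r - ov = b"
    using overlap assms(3) by (auto simp: ov_def)
  have "drop (b - a) (window r e a) = take ov (window r e b)"
    using assms ov by (simp add: occurs_at_def window_def drop_take take_take drop_drop min_def add.commute)
  then have "red (drop (r - ov) (red (window r e a))) = red (take ov (red (window r e b)))"
    by (simp add: red_take_red red_drop_red ov(3)[symmetric])
  moreover have "red (take ov P) \<noteq> red (drop (r - ov) P')" if "P = p \<or> P = q" "P' = p \<or> P' = q" for P P'
    using that ov non_overlapping_p non_overlapping_q mutually_non_overlapping length_p length_q
    by (auto simp: non_overlapping_def mutually_non_overlapping_def)
  ultimately show False
    using assms(1,2) unfolding occurs_at_def by metis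
qed

definition interior :: "nat list \<Rightarrow> nat \<Rightarrow> nat \<Rightarrow> bool" where
  "interior e a k \<longleftrightarrow> occurs_at e a \<and> a < k \<and> k + 1 < a + r"

lemma interior_occurrence_unique:
  assumes "interior e a' k" and "occurs_at e a" and "a \<le> k" and "k < a + r"
  shows "a' = a"
proof -
  have "occurs_at e a'" "a' < k" "k + 1 < a' + r"
    using assms(1) by (auto simp: interior_def)
  then show ?thesis
    using occurrences_apart[OF assms(2), of a'] occurrences_apart[OF _ assms(2), of a'] assms(3,4)
    by (cases a a' rule: linorder_cases) auto
qed

text \<open>Occurrences may share an endpoint, where p and q agree, so only interior positions
  are rewritten; the occurrence containing an interior position is unique.\<close>

definition swap_occurrences :: "nat list \<Rightarrow> nat list" where
  "swap_occurrences e = map (\<lambda>k. if \<exists>a. interior e a k then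
      (let a = SOME a. interior e a k; w = window r e a in values_of w ! (other (red w) ! (k - a)))
      else e ! k) [0..<length e]"

lemma length_swap_occurrences: "length (swap_occurrences e) = length e"
  by (simp add: swap_occurrences_def)

lemma nth_swap_occurrences_interior:
  assumes "interior e a k"
  shows "swap_occurrences e ! k = values_of (window r e a) ! (other (red (window r e a)) ! (k - a))"
proof -
  have "(SOME a. interior e a k) = a"
  proof (rule some_equality)
    show "a' = a" if "interior e a' k" for a'
      using interior_occurrence_unique[OF that] assms by (auto simp: interior_def)
  qed fact
  moreover have "k < length e"
    using assms by (auto simp: interior_def occurs_at_def)
  ultimately show ?thesis
    using assms by (auto simp: swap_occurrences_def Let_def)
qed

lemma nth_swap_occurrences_exterior:
  "\<not> (\<exists>a. interior e a k) \<Longrightarrow> k < length e \<Longrightarrow> swap_occurrences e ! k = e ! k"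
  by (simp add: swap_occurrences_def)

lemma nth_occurrence:
  assumes "occurs_at e a" and "c < r"
  shows "e ! (a + c) = values_of (window r e a) ! (red (window r e a) ! c)"
  using assms values_of_nth_red[of c "window r e a"]
  by (simp add: occurs_at_def length_window nth_window)

lemma set_other_red_window:
  assumes "occurs_at e a"
  shows "set (other (red (window r e a))) = {0..<length (values_of (window r e a))}"
proof -
  have "set (red (window r e a)) = set p"
    using assms set_q by (auto simp: occurs_at_def)
  then show ?thesis
    by (simp add: set_other set_red length_values_of)
qed

lemma window_swap_occurrences:
  assumes occ: "occurs_at e a"
  shows "window r (swap_occurrences e) a
           = map ((!) (values_of (window r e a))) (other (red (window r e a)))"
proof (rule nth_equalityI)
  have a: "a + r \<le> length e"
    using occ by (simp add: occurs_at_def)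
  have length_other: "length (other P) = r" for P
    using length_p length_q by (simp add: other_def)
  then show "length (window r (swap_occurrences e) a)
               = length (map ((!) (values_of (window r e a))) (other (red (window r e a))))"
    using a by (simp add: length_window length_swap_occurrences)
  fix c
  assume "c < length (window r (swap_occurrences e) a)"
  then have c: "c < r"
    using a by (simp add: length_window length_swap_occurrences)
  show "window r (swap_occurrences e) a ! c
          = map ((!) (values_of (window r e a))) (other (red (window r e a))) ! c"
  proof (cases "0 < c \<and> c + 1 < r")
    case True
    then have "interior e a (a + c)"
      using occ by (simp add: interior_def)
    then show ?thesis
      using a c length_other
      by (simp add: nth_window length_swap_occurrences nth_swap_occurrences_interior)
  next
    case False
    have "\<not> (\<exists>a'. interior e a' (a + c))"
      using interior_occurrence_unique[OF _ occ] False c by (fastforce simp: interior_def)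
    moreover have "other (red (window r e a)) ! c = red (window r e a) ! c"
      using False c occ by (intro other_endpoints) (auto simp: occurs_at_def)
    ultimately show ?thesis
      using a c length_other nth_occurrence[OF occ c]
      by (simp add: nth_window length_swap_occurrences nth_swap_occurrences_exterior)
  qed
qed

lemma red_window_swap_occurrences:
  assumes "occurs_at e a"
  shows "red (window r (swap_occurrences e) a) = other (red (window r e a))"
  using red_map_nth_sorted[OF sorted_values_of] red_ident[OF set_other_red_window[OF assms]]
    set_other_red_window[OF assms]
  by (simp add: window_swap_occurrences[OF assms])

lemma occurs_at_swap_occurrences_if:
  "occurs_at e a \<Longrightarrow> occurs_at (swap_occurrences e) a"
  using red_window_swap_occurrences[of e a] other_cases
  by (simp add: occurs_at_def length_swap_occurrences)

lemma occurs_at_swap_occurrences_iff: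
  "occurs_at (swap_occurrences e) a \<longleftrightarrow> occurs_at e a"
proof
  assume occ: "occurs_at (swap_occurrences e) a"
  show "occurs_at e a"
  proof (rule ccontr)
    assume not_occ: "\<not> occurs_at e a"
    have a: "a + r \<le> length e"
      using occ by (simp add: occurs_at_def length_swap_occurrences)
    have "swap_occurrences e ! (a + c) = e ! (a + c)" if "c < r" for c
    proof (rule nth_swap_occurrences_exterior)
      show "\<not> (\<exists>a'. interior e a' (a + c))"
      proof
        assume "\<exists>a'. interior e a' (a + c)"
        then obtain a' where "interior e a' (a + c)" ..
        then have "interior (swap_occurrences e) a' (a + c)" and "a' \<noteq> a"
          using occurs_at_swap_occurrences_if not_occ by (auto simp: interior_def)
        then show False
          using interior_occurrence_unique[OF _ occ] that by simp
      qed
    qed (use a that in simp)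
    then have "window r (swap_occurrences e) a = window r e a"
      using a by (intro nth_equalityI) (simp_all add: length_window length_swap_occurrences nth_window)
    then show False
      using occ not_occ a by (simp add: occurs_at_def)
  qed
qed (rule occurs_at_swap_occurrences_if)

lemma swap_occurrences_involution: "swap_occurrences (swap_occurrences e) = e"
proof (rule nth_equalityI)
  show "length (swap_occurrences (swap_occurrences e)) = length e"
    by (simp add: length_swap_occurrences)
  fix k
  assume "k < length (swap_occurrences (swap_occurrences e))"
  then have k: "k < length e"
    by (simp add: length_swap_occurrences)
  have interior_iff: "interior (swap_occurrences e) a k \<longleftrightarrow> interior e a k" for a
    by (simp add: interior_def occurs_at_swap_occurrences_iff)
  show "swap_occurrences (swap_occurrences e) ! k = e ! k"
  proof (cases "\<exists>a. interior e a k")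
    case True
    then obtain a where int: "interior e a k" ..
    then have occ: "occurs_at e a" and ka: "a < k" "k < a + r"
      by (auto simp: interior_def)
    let ?w = "window r e a"
    have "set (window r (swap_occurrences e) a) = set (values_of ?w)"
      using set_other_red_window[OF occ]
      by (auto simp: window_swap_occurrences[OF occ] in_set_conv_nth)
    then have "values_of (window r (swap_occurrences e) a) = values_of ?w"
      by (simp add: values_of_def set_values_of)
    moreover have "other (red (window r (swap_occurrences e) a)) = red ?w"
      using occ by (simp add: red_window_swap_occurrences other_other occurs_at_def)
    ultimately have "swap_occurrences (swap_occurrences e) ! k = values_of ?w ! (red ?w ! (k - a))"
      using int interior_iff by (simp add: nth_swap_occurrences_interior)
    also have "\<dots> = e ! k"
      using nth_occurrence[OF occ, of "k - a"] ka by simp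
    finally show ?thesis .
  next
    case False
    then show ?thesis
      using k interior_iff
      by (simp add: length_swap_occurrences nth_swap_occurrences_exterior)
  qed
qed

lemma swap_occurrences_inv_seqs:
  assumes "e \<in> inv_seqs n"
  shows "swap_occurrences e \<in> inv_seqs n"
proof -
  have e: "length e = n" "\<And>i. i < n \<Longrightarrow> e ! i \<le> i"
    using assms by (auto simp: inv_seqs_def)
  have "swap_occurrences e ! k \<le> k" if k: "k < n" for k
  proof (cases "\<exists>a. interior e a k")
    case True
    then obtain a where int: "interior e a k" ..
    then have occ: "occurs_at e a" and ka: "a < k" "k < a + r"
      by (auto simp: interior_def)
    let ?w = "window r e a"
    have "red ?w = p \<or> red ?w = q"
      using occ by (simp add: occurs_at_def)
    moreover have "set (red ?w) \<subseteq> {0..<length (values_of ?w)}"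
      by (simp add: set_red length_values_of)
    moreover have "values_of ?w ! (red ?w ! j) \<le> a + j" if "j < length (red ?w)" for j
    proof -
      have "j < r" "a + j < n"
        using that occ e by (auto simp: occurs_at_def length_window)
      then show ?thesis
        using e nth_occurrence[OF occ, of j] by fastforce
    qed
    ultimately have "values_of ?w ! (other (red ?w) ! (k - a)) \<le> a + (k - a)"
      using ka occ
      by (intro changeable_entry_bound[OF changeable_other sorted_values_of])
        (auto simp: occurs_at_def length_window)
    then show ?thesis
      using int ka by (simp add: nth_swap_occurrences_interior)
  qed (use k e in \<open>simp add: nth_swap_occurrences_exterior\<close>)
  then show ?thesis
    using e by (simp add: inv_seqs_def length_swap_occurrences less_Suc_eq_le)
qed

lemma Em_swap_occurrences:
  assumes "P = p \<or> P = q"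
  shows "Em P (swap_occurrences e) = Em (other P) e"
proof -
  have "red (window r (swap_occurrences e) a) = P \<longleftrightarrow> red (window r e a) = other P"
    if "a + r \<le> length e" for a
  proof (cases "occurs_at e a")
    case True
    then show ?thesis
      using assms other_eq_iff[OF _ assms] red_window_swap_occurrences[OF True]
      by (auto simp: occurs_at_def)
  next
    case False
    then have "\<not> occurs_at (swap_occurrences e) a"
      by (simp add: occurs_at_swap_occurrences_iff)
    then show ?thesis
      using False that assms other_cases[of P]
      by (auto simp: occurs_at_def length_swap_occurrences)
  qed
  moreover have "length P = r" "length (other P) = r"
    using assms length_p length_q other_cases[of P] by auto
  ultimately show ?thesis
    by (auto simp: Em_conv_window length_swap_occurrences)
qed

lemma card_inv_seqs_Em_swap:
  "card {e \<in> inv_seqs n. \<Phi> (Em p e) (Em q e)} = card {e \<in> inv_seqs n. \<Phi> (Em q e) (Em p e)}"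
proof (rule bij_betw_same_card[of swap_occurrences], rule bij_betw_byWitness)
  have "Em p (swap_occurrences e) = Em q e" "Em q (swap_occurrences e) = Em p e" for e
    using Em_swap_occurrences[of p] Em_swap_occurrences[of q] by (simp_all add: other_def)
  then show "swap_occurrences ` {e \<in> inv_seqs n. \<Phi> (Em p e) (Em q e)}
               \<subseteq> {e \<in> inv_seqs n. \<Phi> (Em q e) (Em p e)}"
    and "swap_occurrences ` {e \<in> inv_seqs n. \<Phi> (Em q e) (Em p e)}
               \<subseteq> {e \<in> inv_seqs n. \<Phi> (Em p e) (Em q e)}"
    by (auto simp: swap_occurrences_inv_seqs)
qed (simp_all add: swap_occurrences_involution)

end

theorem mainTheorem2:
  fixes p q :: "nat list" and r :: nat
  assumes "is_pattern p r" and "is_pattern q r"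
    and "non_overlapping p" and "non_overlapping q"
    and "mutually_non_overlapping p q"
    and "interchangeable p q"
  shows "(\<forall>n S T. S \<subseteq> {1..n} \<longrightarrow> T \<subseteq> {1..n} \<longrightarrow>
            card {e \<in> inv_seqs n. Em p e = S \<and> Em q e = T}
          = card {e \<in> inv_seqs n. Em p e = T \<and> Em q e = S})
         \<and> super_strongly_wilf_equiv p q"
proof -
  interpret interchangeable_patterns p q r
    using assms by unfold_locales
  have "card {e \<in> inv_seqs n. Em p e = S \<and> Em q e = T}
          = card {e \<in> inv_seqs n. Em p e = T \<and> Em q e = S}" for n S T
    using card_inv_seqs_Em_swap[of n "\<lambda>A B. A = S \<and> B = T"] by (simp add: conj_commute)
  moreover have "card {e \<in> inv_seqs n. Em p e = T} = card {e \<in> inv_seqs n. Em q e = T}" for n T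
    using card_inv_seqs_Em_swap[of n "\<lambda>A B. A = T"] by simp
  ultimately show ?thesis
    by (simp add: super_strongly_wilf_equiv_def)
qed

end
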